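(* For all integers $m\ge1$, $n\ge0$ and $l\in\{1,\dots,d\}$, $$\alpha\Big(\prod_{r=n}^{n+m-1}(A_r+B^l_r)\Big)\ge\gamma(1-\gamma)^{m-1}\mathcal G_{[n,n+m)}-\mathcal H^l_{[n,n+m)}.$$
   Context: Setting (random batch CBO). Fix integers $N\ge2$, $d\ge1$, batch size $P\ge2$, drift $\gamma\in(0,1)$, noise level $\zeta\ge0$; $\mathcal N=\{1,\dots,N\}$. Weight functions $\omega_{S,j}:(\mathbb R^d)^N\to[0,\infty)$ for nonempty $S\subseteq\mathcal N$, $j\in\mathcal N$, with $\sum_{j\in S}\omega_{S,j}=1$ and $\omega_{S,j}=0$ for $j\notin S$. $\mathcal A$ is the set of partitions of $\mathcal N$ into $\lceil N/P\rceil$ batches, all of size $P$ except possibly one of size at most $P$; $(\mathcal B^n)_{n\ge0}$ i.i.d. uniform on $\mathcal A$; $[i]_n$ is the batch of $\mathcal B^n$ containing $i$. Noise arrays $(\eta^{i,l}_n)_{i,l}$ are i.i.d. in $n$ with $\mathbb E\eta^{i,l}_n=0$, $\mathbb E|\eta^{i,l}_n|^2\le\zeta^2$; initial data, batches, and noises are mutually independent. The dynamics is $\mathbf x^i_{n+1}=\mathbf x^i_n-\gamma(\mathbf x^i_n-\bar{\mathbf x}^{[i]_n,*}_n)-\sum_{l=1}^d(x^{i,l}_n-\bar x^{[i]_n,*,l}_n)\eta^{i,l}_n\mathbf e_l$ with $\bar{\mathbf x}^{S,*}_n=\sum_j\omega_{S,j}(X_n)\mathbf x^j_n$, $X_n=(\mathbf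 x^1_n,\dots,\mathbf x^N_n)$. Matrix notation: $W_n:=(\omega_{[i]_n,j}(X_n))_{i,j}$, $H^l_n:=\mathrm{diag}(\eta^{1,l}_n,\dots,\eta^{N,l}_n)$, $A_n:=(1-\gamma)I_N+\gamma W_n$, $B^l_n:=-H^l_n(I_N-W_n)$ (so that $\mathfrak x^l_{n+1}=(A_n+B^l_n)\mathfrak x^l_n$ with $\mathfrak x^l_n=(x^{1,l}_n,\dots,x^{N,l}_n)^\top$). Products are ordered as $\prod_{k=n_1}^{n_2}M_k:=M_{n_2}\cdots M_{n_1}$. $\alpha(A):=\min_{i,j}\sum_k\min\{a_{ik},a_{jk}\}$; $\|A\|_{1,\infty}:=\max_i\sum_j|a_{ij}|$. $\mathcal G_{[n,n+m)}:=\min_{i,j}|\{r:n\le r<n+m,[i]_r=[j]_r\}|$ and $\mathcal H^l_{[n,n+m)}:=2\big[\prod_{r=n}^{n+m-1}(1+2\|H^l_r\|_{1,\infty})-1\big]$. *)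

theory Defs
  imports Complex_Main "HOL-Library.Disjoint_Sets"
begin

(* Indices: particles i \<in> {1..N}, coordinates l \<in> {1..d}.
   A state X :: nat \<Rightarrow> nat \<Rightarrow> real stores X i l = x^{i,l}.
   N x N matrices are functions nat \<Rightarrow> nat \<Rightarrow> real, only entries with
   indices in {1..N} are meaningful. *)

type_synonym state = "nat \<Rightarrow> nat \<Rightarrow> real"
type_synonym mat = "nat \<Rightarrow> nat \<Rightarrow> real"

definition batch_partitions :: "nat \<Rightarrow> nat \<Rightarrow> nat set set set" where
  "batch_partitions N P =
     {B. partition_on {1..N} B \<and> card B = nat \<lceil>real N / real P\<rceil> \<and>
         (\<forall>S\<in>B. card S \<le> P) \<and>
         (\<forall>S\<in>B. \<forall>S'\<in>B. card S \<noteq> P \<longrightarrow> card S' \<noteq> P \<longrightarrow> S = S')}"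

definition batch_of :: "nat set set \<Rightarrow> nat \<Rightarrow> nat set" where
  "batch_of B i = (THE S. S \<in> B \<and> i \<in> S)"

definition admissible_weights :: "nat \<Rightarrow> (nat set \<Rightarrow> nat \<Rightarrow> state \<Rightarrow> real) \<Rightarrow> bool" where
  "admissible_weights N \<omega> \<longleftrightarrow>
     (\<forall>S X. S \<noteq> {} \<and> S \<subseteq> {1..N} \<longrightarrow>
        (\<forall>j\<in>{1..N}. \<omega> S j X \<ge> 0) \<and>
        (\<Sum>j\<in>S. \<omega> S j X) = 1 \<and>
        (\<forall>j\<in>{1..N}. j \<notin> S \<longrightarrow> \<omega> S j X = 0))"

definition xbar :: "nat \<Rightarrow> (nat set \<Rightarrow> nat \<Rightarrow> state \<Rightarrow> real) \<Rightarrow> nat set \<Rightarrow> state \<Rightarrow> nat \<Rightarrow> real" where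
  "xbar N \<omega> S X l = (\<Sum>j\<in>{1..N}. \<omega> S j X * X j l)"

text \<open>The random batch CBO trajectory, for one realization of initial data X0,
  batches Bs n and noises eta n i l.\<close>
primrec cbo :: "nat \<Rightarrow> real \<Rightarrow> (nat set \<Rightarrow> nat \<Rightarrow> state \<Rightarrow> real) \<Rightarrow> (nat \<Rightarrow> nat set set)
                  \<Rightarrow> (nat \<Rightarrow> nat \<Rightarrow> nat \<Rightarrow> real) \<Rightarrow> state \<Rightarrow> nat \<Rightarrow> state" where
  "cbo N \<gamma> \<omega> Bs \<eta> X0 0 = X0"
| "cbo N \<gamma> \<omega> Bs \<eta> X0 (Suc n) =
     (let X = cbo N \<gamma> \<omega> Bs \<eta> X0 n in
      (\<lambda>i l. X i l - \<gamma> * (X i l - xbar N \<omega> (batch_of (Bs n) i) X l)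
                   - (X i l - xbar N \<omega> (batch_of (Bs n) i) X l) * \<eta> n i l))"

definition idm :: mat where
  "idm i j = (if i = j then 1 else 0)"

definition matmul :: "nat \<Rightarrow> mat \<Rightarrow> mat \<Rightarrow> mat" where
  "matmul N M M' i j = (\<Sum>k\<in>{1..N}. M i k * M' k j)"

primrec matprod :: "nat \<Rightarrow> (nat \<Rightarrow> mat) \<Rightarrow> nat \<Rightarrow> nat \<Rightarrow> mat" where
  "matprod N M n 0 = idm"
| "matprod N M n (Suc m) = matmul N (M (n + m)) (matprod N M n m)"

definition Wmat :: "(nat set \<Rightarrow> nat \<Rightarrow> state \<Rightarrow> real) \<Rightarrow> (nat \<Rightarrow> nat set set) \<Rightarrow> (nat \<Rightarrow> state) \<Rightarrow> nat \<Rightarrow> mat" where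
  "Wmat \<omega> Bs X n i j = \<omega> (batch_of (Bs n) i) j (X n)"

definition Hmat :: "(nat \<Rightarrow> nat \<Rightarrow> nat \<Rightarrow> real) \<Rightarrow> nat \<Rightarrow> nat \<Rightarrow> mat" where
  "Hmat \<eta> n l i j = (if i = j then \<eta> n i l else 0)"

definition Amat :: "real \<Rightarrow> mat \<Rightarrow> mat" where
  "Amat \<gamma> W i j = (1 - \<gamma>) * idm i j + \<gamma> * W i j"

definition Bmat :: "nat \<Rightarrow> mat \<Rightarrow> mat \<Rightarrow> mat" where
  "Bmat N H W i j = - matmul N H (\<lambda>a b. idm a b - W a b) i j"

definition mat_add :: "mat \<Rightarrow> mat \<Rightarrow> mat" where
  "mat_add M M' i j = M i j + M' i j"

definition alpha :: "nat \<Rightarrow> mat \<Rightarrow> real" where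
  "alpha N A = Min {(\<Sum>k\<in>{1..N}. min (A i k) (A j k)) | i j. i \<in> {1..N} \<and> j \<in> {1..N}}"

definition norm1inf :: "nat \<Rightarrow> mat \<Rightarrow> real" where
  "norm1inf N A = Max {(\<Sum>j\<in>{1..N}. \<bar>A i j\<bar>) | i. i \<in> {1..N}}"

definition Gcal :: "nat \<Rightarrow> (nat \<Rightarrow> nat set set) \<Rightarrow> nat \<Rightarrow> nat \<Rightarrow> nat" where
  "Gcal N Bs n m = Min {card {r. n \<le> r \<and> r < n + m \<and> batch_of (Bs r) i = batch_of (Bs r) j} | i j.
                         i \<in> {1..N} \<and> j \<in> {1..N}}"

definition Hcal :: "nat \<Rightarrow> (nat \<Rightarrow> nat \<Rightarrow> nat \<Rightarrow> real) \<Rightarrow> nat \<Rightarrow> nat \<Rightarrow> nat \<Rightarrow> real" where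
  "Hcal N \<eta> l n m = 2 * ((\<Prod>r\<in>{n..<n+m}. 1 + 2 * norm1inf N (Hmat \<eta> r l)) - 1)"

end

theory Submission
  imports Defs
begin

(* The unperturbed product Q of the matrices A_r = (1 - gamma) I + gamma W_r is row-stochastic.
   Whenever i and j share a batch at step r, rows i and j of W_r coincide, so rows i and j of
   A_r Q gain a common mass gamma, and every later step keeps at least the fraction 1 - gamma of
   the common mass; this gives alpha(Q) >= gamma (1 - gamma)^(m-1) G.
   The noise matrices B_r = -H_r (I - W_r) have absolute row sums at most 2 ||H_r||, so
   expanding the product row by row, each row of the perturbed product lies within
   prod_r (1 + 2 ||H_r||) - 1 of the corresponding row of Q in the l1 norm, and the common mass
   of two rows drops by at most the sum of their l1 perturbations. *)

section \<open>Row-stochastic matrices and row norms\<close>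

definition row_norm :: "nat \<Rightarrow> mat \<Rightarrow> nat \<Rightarrow> real" where
  "row_norm N M i = (\<Sum>k\<in>{1..N}. \<bar>M i k\<bar>)"

definition stochastic :: "nat \<Rightarrow> mat \<Rightarrow> bool" where
  "stochastic N M \<longleftrightarrow> (\<forall>i\<in>{1..N}. (\<forall>k\<in>{1..N}. 0 \<le> M i k) \<and> (\<Sum>k\<in>{1..N}. M i k) = 1)"

lemma stochasticD:
  assumes "stochastic N M" "i \<in> {1..N}"
  shows "\<And>k. k \<in> {1..N} \<Longrightarrow> 0 \<le> M i k" "(\<Sum>k\<in>{1..N}. M i k) = 1"
  using assms unfolding stochastic_def by auto

lemma sum_idm_mult:
  assumes "i \<in> {1..N}"
  shows "(\<Sum>k\<in>{1..N}. idm i k * f k) = f i"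
proof -
  have "(\<Sum>k\<in>{1..N}. idm i k * f k) = (\<Sum>k\<in>{1..N}. if i = k then f k else 0)"
    by (rule sum.cong) (auto simp: idm_def)
  then show ?thesis using assms by simp
qed

lemma matmul_Amat:
  assumes "i \<in> {1..N}"
  shows "matmul N (Amat \<gamma> W) Q i k = (1 - \<gamma>) * Q i k + \<gamma> * matmul N W Q i k"
proof -
  have "matmul N (Amat \<gamma> W) Q i k
      = (\<Sum>p\<in>{1..N}. (1 - \<gamma>) * (idm i p * Q p k) + \<gamma> * (W i p * Q p k))"
    unfolding matmul_def Amat_def by (rule sum.cong) (auto simp: algebra_simps)
  also have "\<dots> = (1 - \<gamma>) * Q i k + \<gamma> * matmul N W Q i k"
    unfolding matmul_def using sum_idm_mult[OF assms, of "\<lambda>p. Q p k"]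
    by (simp add: sum.distrib sum_distrib_left[symmetric])
  finally show ?thesis .
qed

lemma matmul_mat_add_diff:
  "matmul N (mat_add A B) P i k - matmul N A Q i k
   = matmul N A (\<lambda>a c. P a c - Q a c) i k + matmul N B P i k"
  unfolding matmul_def mat_add_def
  by (simp add: sum.distrib[symmetric] sum_subtractf[symmetric] algebra_simps)

lemma stochastic_idm: "stochastic N idm"
  unfolding stochastic_def by (auto simp: sum_idm_mult[where f = "\<lambda>_. 1", simplified] idm_def)

lemma stochastic_matmul:
  assumes M: "stochastic N M" and Q: "stochastic N Q"
  shows "stochastic N (matmul N M Q)"
  unfolding stochastic_def
proof (intro ballI conjI)
  fix i assume i: "i \<in> {1..N}"
  show "0 \<le> matmul N M Q i k" if "k \<in> {1..N}" for k
    unfolding matmul_def using stochasticD[OF M i] stochasticD(1)[OF Q _ that]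
    by (intro sum_nonneg) auto
  have "(\<Sum>k\<in>{1..N}. matmul N M Q i k) = (\<Sum>p\<in>{1..N}. M i p * (\<Sum>k\<in>{1..N}. Q p k))"
    unfolding matmul_def by (subst sum.swap) (simp add: sum_distrib_left)
  also have "\<dots> = 1"
    using stochasticD(2)[OF Q] stochasticD(2)[OF M i] by simp
  finally show "(\<Sum>k\<in>{1..N}. matmul N M Q i k) = 1" .
qed

lemma stochastic_matprod:
  "(\<And>r. stochastic N (M r)) \<Longrightarrow> stochastic N (matprod N M n m)"
  by (induction m) (simp_all add: stochastic_idm stochastic_matmul)

lemma stochastic_Amat:
  assumes "stochastic N W" "0 \<le> \<gamma>" "\<gamma> \<le> 1"
  shows "stochastic N (Amat \<gamma> W)"
  unfolding stochastic_def
proof (intro ballI conjI)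
  fix i assume i: "i \<in> {1..N}"
  show "0 \<le> Amat \<gamma> W i k" if "k \<in> {1..N}" for k
    using assms stochasticD(1)[OF assms(1) i that] by (auto simp: Amat_def idm_def)
  have "(\<Sum>k\<in>{1..N}. Amat \<gamma> W i k)
      = (1 - \<gamma>) * (\<Sum>k\<in>{1..N}. idm i k) + \<gamma> * (\<Sum>k\<in>{1..N}. W i k)"
    unfolding Amat_def by (simp add: sum.distrib sum_distrib_left)
  then show "(\<Sum>k\<in>{1..N}. Amat \<gamma> W i k) = 1"
    using stochasticD(2)[OF assms(1) i] stochasticD(2)[OF stochastic_idm i] by simp
qed

lemma row_norm_nonneg: "0 \<le> row_norm N M i"
  unfolding row_norm_def by (simp add: sum_nonneg)

lemma row_norm_add_le: "row_norm N (\<lambda>a c. M a c + M' a c) i \<le> row_norm N M i + row_norm N M' i"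
  unfolding row_norm_def by (simp add: sum.distrib[symmetric] sum_mono abs_triangle_ineq)

lemma row_norm_matmul_le:
  assumes "\<And>k. k \<in> {1..N} \<Longrightarrow> row_norm N M' k \<le> c"
  shows "row_norm N (matmul N M M') i \<le> row_norm N M i * c"
proof -
  have "row_norm N (matmul N M M') i \<le> (\<Sum>j\<in>{1..N}. \<Sum>k\<in>{1..N}. \<bar>M i k\<bar> * \<bar>M' k j\<bar>)"
    unfolding row_norm_def matmul_def
    by (intro sum_mono order.trans[OF sum_abs]) (simp add: abs_mult)
  also have "\<dots> = (\<Sum>k\<in>{1..N}. \<bar>M i k\<bar> * row_norm N M' k)"
    unfolding row_norm_def by (subst sum.swap) (simp add: sum_distrib_left)
  also have "\<dots> \<le> (\<Sum>k\<in>{1..N}. \<bar>M i k\<bar> * c)"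
    by (intro sum_mono mult_left_mono assms) auto
  also have "\<dots> = row_norm N M i * c"
    unfolding row_norm_def by (simp add: sum_distrib_right)
  finally show ?thesis .
qed

lemma row_norm_stochastic: "stochastic N M \<Longrightarrow> i \<in> {1..N} \<Longrightarrow> row_norm N M i = 1"
  unfolding row_norm_def using stochasticD by simp

lemma row_norm_matprod_le_one:
  assumes "\<And>r i. i \<in> {1..N} \<Longrightarrow> row_norm N (M r) i \<le> 1" "i \<in> {1..N}"
  shows "row_norm N (matprod N M n m) i \<le> 1"
  using assms(2)
proof (induction m arbitrary: i)
  case 0
  then show ?case using row_norm_stochastic[OF stochastic_idm] by simp
next
  case (Suc m)
  have "row_norm N (matprod N M n (Suc m)) i \<le> row_norm N (M (n + m)) i * 1"
    unfolding matprod.simps by (rule row_norm_matmul_le) (rule Suc.IH)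
  also have "\<dots> \<le> 1" using assms(1) Suc.prems by simp
  finally show ?case .
qed

section \<open>Perturbed products\<close>

lemma row_norm_matprod_perturb_le:
  assumes A: "\<And>r i. i \<in> {1..N} \<Longrightarrow> row_norm N (A r) i \<le> 1"
    and B: "\<And>r i. i \<in> {1..N} \<Longrightarrow> row_norm N (B r) i \<le> b r"
    and i: "i \<in> {1..N}"
  shows "row_norm N (\<lambda>a c. matprod N (\<lambda>r. mat_add (A r) (B r)) n m a c - matprod N A n m a c) i
         \<le> (\<Prod>r\<in>{n..<n+m}. 1 + b r) - 1"
  using i
proof (induction m arbitrary: i)
  case 0
  then show ?case by (simp add: row_norm_def)
next
  case (Suc m)
  define P where "P = matprod N (\<lambda>r. mat_add (A r) (B r)) n m"
  define Q where "Q = matprod N A n m"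
  define E where "E = (\<Prod>r\<in>{n..<n+m}. 1 + b r)"
  have "0 \<le> b r" for r
    using row_norm_nonneg[of N "B r" i] B[OF Suc.prems, of r] by linarith
  then have E: "1 \<le> E"
    unfolding E_def by (intro prod_ge_1) auto
  have D: "row_norm N (\<lambda>a c. P a c - Q a c) k \<le> E - 1" if "k \<in> {1..N}" for k
    using Suc.IH[OF that] unfolding P_def Q_def E_def .
  have P: "row_norm N P k \<le> E" if "k \<in> {1..N}" for k
    using row_norm_add_le[of N Q "\<lambda>a c. P a c - Q a c" k] D[OF that]
      row_norm_matprod_le_one[where M = A and n = n and m = m, OF A that]
    unfolding Q_def by simp
  have "row_norm N (\<lambda>a c. matprod N (\<lambda>r. mat_add (A r) (B r)) n (Suc m) a c
                        - matprod N A n (Suc m) a c) i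
      = row_norm N (\<lambda>a c. matmul N (A (n + m)) (\<lambda>a c. P a c - Q a c) a c
                        + matmul N (B (n + m)) P a c) i"
    unfolding P_def Q_def by (simp add: matmul_mat_add_diff)
  also have "\<dots> \<le> row_norm N (A (n + m)) i * (E - 1) + row_norm N (B (n + m)) i * E"
    by (intro order.trans[OF row_norm_add_le] add_mono row_norm_matmul_le D P)
  also have "\<dots> \<le> 1 * (E - 1) + b (n + m) * E"
    using A[OF Suc.prems] B[OF Suc.prems] E by (intro add_mono mult_right_mono) auto
  also have "\<dots> = (\<Prod>r\<in>{n..<n + Suc m}. 1 + b r) - 1"
    unfolding E_def by (simp add: prod.atLeastLessThan_Suc algebra_simps)
  finally show ?case .
qed

section \<open>Overlap of two rows\<close>

definition overlap :: "nat \<Rightarrow> mat \<Rightarrow> nat \<Rightarrow> nat \<Rightarrow> real" where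
  "overlap N M i j = (\<Sum>k\<in>{1..N}. min (M i k) (M j k))"

lemma overlap_perturb_ge:
  "overlap N Q i j - row_norm N (\<lambda>a c. P a c - Q a c) i - row_norm N (\<lambda>a c. P a c - Q a c) j
   \<le> overlap N P i j"
proof -
  have "overlap N Q i j - row_norm N (\<lambda>a c. P a c - Q a c) i - row_norm N (\<lambda>a c. P a c - Q a c) j
      = (\<Sum>k\<in>{1..N}. min (Q i k) (Q j k) - \<bar>P i k - Q i k\<bar> - \<bar>P j k - Q j k\<bar>)"
    unfolding overlap_def row_norm_def by (simp add: sum_subtractf)
  also have "\<dots> \<le> overlap N P i j"
    unfolding overlap_def by (intro sum_mono) (auto simp: min_def abs_if)
  finally show ?thesis .
qed

lemma overlap_convex_ge:
  assumes "0 \<le> \<gamma>" "\<gamma> \<le> 1"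
  shows "(1 - \<gamma>) * overlap N M i j + \<gamma> * overlap N M' i j
         \<le> overlap N (\<lambda>a k. (1 - \<gamma>) * M a k + \<gamma> * M' a k) i j"
proof -
  have "(1 - \<gamma>) * overlap N M i j + \<gamma> * overlap N M' i j
      = (\<Sum>k\<in>{1..N}. (1 - \<gamma>) * min (M i k) (M j k) + \<gamma> * min (M' i k) (M' j k))"
    unfolding overlap_def by (simp add: sum.distrib sum_distrib_left)
  also have "\<dots> \<le> overlap N (\<lambda>a k. (1 - \<gamma>) * M a k + \<gamma> * M' a k) i j"
    unfolding overlap_def using assms
    by (intro sum_mono min.boundedI add_mono mult_left_mono) auto
  finally show ?thesis .
qed

lemma overlap_stochastic_ge:
  assumes "stochastic N M" "i \<in> {1..N}" "j \<in> {1..N}"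
  shows "of_bool (\<forall>k\<in>{1..N}. M i k = M j k) \<le> overlap N M i j"
proof (cases "\<forall>k\<in>{1..N}. M i k = M j k")
  case True
  then have "overlap N M i j = (\<Sum>k\<in>{1..N}. M i k)"
    unfolding overlap_def by (intro sum.cong) auto
  then show ?thesis using stochasticD(2)[OF assms(1,2)] by simp
next
  case False
  have "0 \<le> overlap N M i j"
    unfolding overlap_def using stochasticD(1)[OF assms(1,2)] stochasticD(1)[OF assms(1,3)]
    by (intro sum_nonneg) simp
  with False show ?thesis by auto
qed

lemma overlap_Amat_matmul_ge:
  assumes W: "stochastic N W" and Q: "stochastic N Q" and \<gamma>: "0 \<le> \<gamma>" "\<gamma> \<le> 1"
    and i: "i \<in> {1..N}" and j: "j \<in> {1..N}"
  shows "(1 - \<gamma>) * overlap N Q i j + \<gamma> * of_bool (\<forall>k\<in>{1..N}. W i k = W j k)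
         \<le> overlap N (matmul N (Amat \<gamma> W) Q) i j"
proof -
  have "of_bool (\<forall>k\<in>{1..N}. W i k = W j k)
        \<le> (of_bool (\<forall>k\<in>{1..N}. matmul N W Q i k = matmul N W Q j k) :: real)"
    by (auto simp: matmul_def intro!: sum.cong)
  also have "\<dots> \<le> overlap N (matmul N W Q) i j"
    by (rule overlap_stochastic_ge[OF stochastic_matmul[OF W Q] i j])
  finally have "(1 - \<gamma>) * overlap N Q i j + \<gamma> * of_bool (\<forall>k\<in>{1..N}. W i k = W j k)
                \<le> (1 - \<gamma>) * overlap N Q i j + \<gamma> * overlap N (matmul N W Q) i j"
    using \<gamma> by (simp add: mult_left_mono)
  also have "\<dots> \<le> overlap N (\<lambda>a k. (1 - \<gamma>) * Q a k + \<gamma> * matmul N W Q a k) i j"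
    by (rule overlap_convex_ge[OF \<gamma>])
  also have "\<dots> = overlap N (matmul N (Amat \<gamma> W) Q) i j"
    using i j by (simp add: overlap_def matmul_Amat)
  finally show ?thesis .
qed

lemma card_filter_interval_Suc:
  "card {r. n \<le> r \<and> r < n + Suc m \<and> T r} = card {r. n \<le> r \<and> r < n + m \<and> T r} + of_bool (T (n + m))"
proof -
  have "{r. n \<le> r \<and> r < n + Suc m \<and> T r}
        = {r. n \<le> r \<and> r < n + m \<and> T r} \<union> (if T (n + m) then {n + m} else {})"
    by (auto simp: less_Suc_eq)
  moreover have "finite {r. n \<le> r \<and> r < n + m \<and> T r}"
    by (rule finite_subset[of _ "{..<n + m}"]) auto
  ultimately show ?thesis by auto
qed

lemma overlap_matprod_Amat_ge:
  fixes \<gamma> :: real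
  assumes W: "\<And>r. stochastic N (W r)" and \<gamma>: "0 \<le> \<gamma>" "\<gamma> \<le> 1"
    and i: "i \<in> {1..N}" and j: "j \<in> {1..N}" and "1 \<le> m"
  shows "\<gamma> * (1 - \<gamma>) ^ (m - 1) * real (card {r. n \<le> r \<and> r < n + m \<and> (\<forall>k\<in>{1..N}. W r i k = W r j k)})
         \<le> overlap N (matprod N (\<lambda>r. Amat \<gamma> (W r)) n m) i j"
proof -
  define T where "T r \<longleftrightarrow> (\<forall>k\<in>{1..N}. W r i k = W r j k)" for r
  let ?Q = "matprod N (\<lambda>r. Amat \<gamma> (W r)) n"
  have step: "(1 - \<gamma>) * overlap N (?Q m') i j + \<gamma> * of_bool (T (n + m')) \<le> overlap N (?Q (Suc m')) i j"
    for m'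
    unfolding T_def
    using overlap_Amat_matmul_ge[OF W stochastic_matprod[OF stochastic_Amat[OF W \<gamma>]] \<gamma> i j] by simp
  have "\<gamma> * (1 - \<gamma>) ^ (m - 1) * real (card {r. n \<le> r \<and> r < n + m \<and> T r}) \<le> overlap N (?Q m) i j"
    using \<open>1 \<le> m\<close>
  proof (induction m rule: nat_induct_at_least)
    case base
    have idm: "0 \<le> (1 - \<gamma>) * overlap N idm i j"
      unfolding overlap_def idm_def using \<gamma> by (intro mult_nonneg_nonneg sum_nonneg) auto
    have "{r. n \<le> r \<and> r < n + 1 \<and> T r} = (if T n then {n} else {})"
      by (auto simp: le_less_Suc_eq)
    then have card: "card {r. n \<le> r \<and> r < n + 1 \<and> T r} = of_bool (T n)"
      by (simp only:) simp
    from idm step[of 0] have "\<gamma> * of_bool (T n) \<le> overlap N (?Q 1) i j"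
      by simp
    then show ?case
      unfolding card by simp
  next
    case (Suc m)
    define c where "c = real (card {r. n \<le> r \<and> r < n + m \<and> T r})"
    define t where "t = (of_bool (T (n + m)) :: real)"
    have "\<gamma> * (1 - \<gamma>) ^ (Suc m - 1) * (c + t)
        = (1 - \<gamma>) * (\<gamma> * (1 - \<gamma>) ^ (m - 1) * c) + \<gamma> * t * (1 - \<gamma>) ^ m"
      using \<open>1 \<le> m\<close> by (cases m) (simp_all add: algebra_simps)
    also have "\<dots> \<le> (1 - \<gamma>) * overlap N (?Q m) i j + \<gamma> * t * 1"
      using Suc.IH \<gamma> by (intro add_mono mult_left_mono power_le_one) (auto simp: c_def t_def)
    also have "\<dots> \<le> overlap N (?Q (Suc m)) i j"
      using step[of m] by (simp add: t_def)
    finally show ?case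
      using card_filter_interval_Suc[of n m T] by (simp add: c_def t_def)
  qed
  then show ?thesis
    unfolding T_def .
qed

lemma alpha_geI:
  assumes "1 \<le> N" and "\<And>i j. i \<in> {1..N} \<Longrightarrow> j \<in> {1..N} \<Longrightarrow> c \<le> overlap N M i j"
  shows "c \<le> alpha N M"
proof -
  have alpha: "alpha N M = Min {overlap N M i j | i j. i \<in> {1..N} \<and> j \<in> {1..N}}"
    unfolding alpha_def overlap_def ..
  have "finite {overlap N M i j | i j. i \<in> {1..N} \<and> j \<in> {1..N}}"
    by (rule finite_image_set2) simp_all
  then show ?thesis
    unfolding alpha using assms by (subst Min_ge_iff) auto
qed

lemma alpha_matprod_perturbed_ge:
  fixes \<gamma> :: real
  assumes W: "\<And>r. stochastic N (W r)" and \<gamma>: "0 \<le> \<gamma>" "\<gamma> \<le> 1" and "1 \<le> N" "1 \<le> m"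
    and B: "\<And>r i. i \<in> {1..N} \<Longrightarrow> row_norm N (B r) i \<le> b r"
    and G: "\<And>i j. i \<in> {1..N} \<Longrightarrow> j \<in> {1..N} \<Longrightarrow>
              G \<le> card {r. n \<le> r \<and> r < n + m \<and> (\<forall>k\<in>{1..N}. W r i k = W r j k)}"
  shows "\<gamma> * (1 - \<gamma>) ^ (m - 1) * real G - 2 * ((\<Prod>r\<in>{n..<n+m}. 1 + b r) - 1)
         \<le> alpha N (matprod N (\<lambda>r. mat_add (Amat \<gamma> (W r)) (B r)) n m)"
proof (rule alpha_geI[OF \<open>1 \<le> N\<close>])
  fix i j assume i: "i \<in> {1..N}" and j: "j \<in> {1..N}"
  let ?P = "matprod N (\<lambda>r. mat_add (Amat \<gamma> (W r)) (B r)) n m"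
  let ?Q = "matprod N (\<lambda>r. Amat \<gamma> (W r)) n m"
  have A: "row_norm N (Amat \<gamma> (W r)) k \<le> 1" if "k \<in> {1..N}" for r k
    using row_norm_stochastic[OF stochastic_Amat[OF W \<gamma>] that] by simp
  have D: "row_norm N (\<lambda>a c. ?P a c - ?Q a c) k \<le> (\<Prod>r\<in>{n..<n+m}. 1 + b r) - 1"
    if "k \<in> {1..N}" for k
    by (rule row_norm_matprod_perturb_le[where A = "\<lambda>r. Amat \<gamma> (W r)"]) (use A B that in auto)
  have "\<gamma> * (1 - \<gamma>) ^ (m - 1) * real G
        \<le> \<gamma> * (1 - \<gamma>) ^ (m - 1) * card {r. n \<le> r \<and> r < n + m \<and> (\<forall>k\<in>{1..N}. W r i k = W r j k)}"
    using G[OF i j] \<gamma> by (intro mult_left_mono) auto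
  also have "\<dots> \<le> overlap N ?Q i j"
    by (rule overlap_matprod_Amat_ge[OF W \<gamma> i j \<open>1 \<le> m\<close>])
  finally show "\<gamma> * (1 - \<gamma>) ^ (m - 1) * real G - 2 * ((\<Prod>r\<in>{n..<n+m}. 1 + b r) - 1) \<le> overlap N ?P i j"
    using overlap_perturb_ge[of N ?Q i j ?P] D[OF i] D[OF j] by argo
qed

section \<open>The random batch CBO matrices\<close>

lemma batch_of_mem:
  assumes "partition_on A B" "i \<in> A"
  shows "batch_of B i \<in> B" "i \<in> batch_of B i"
proof -
  obtain S where S: "S \<in> B" "i \<in> S"
    using assms partition_onD1 by blast
  have unique: "S' = S" if "S' \<in> B" "i \<in> S'" for S'
    using disjointD[OF partition_onD2[OF assms(1)] that(1) S(1)] that(2) S(2) by blast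
  have "batch_of B i = S"
    unfolding batch_of_def by (rule the_equality) (use S unique in blast)+
  with S show "batch_of B i \<in> B" "i \<in> batch_of B i" by simp_all
qed

lemma stochastic_Wmat:
  assumes "admissible_weights N \<omega>" and "partition_on {1..N} (Bs r)"
  shows "stochastic N (Wmat \<omega> Bs X r)"
  unfolding stochastic_def
proof (intro ballI conjI)
  fix i assume i: "i \<in> {1..N}"
  define S where "S = batch_of (Bs r) i"
  have S: "S \<noteq> {}" "S \<subseteq> {1..N}"
    using batch_of_mem[OF assms(2) i] partition_onD1[OF assms(2)] unfolding S_def by auto
  have w: "\<forall>j\<in>{1..N}. 0 \<le> \<omega> S j (X r)" "(\<Sum>j\<in>S. \<omega> S j (X r)) = 1"
    "\<forall>j\<in>{1..N}. j \<notin> S \<longrightarrow> \<omega> S j (X r) = 0"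
    using assms(1) S unfolding admissible_weights_def by blast+
  show "0 \<le> Wmat \<omega> Bs X r i k" if "k \<in> {1..N}" for k
    using w(1) that unfolding Wmat_def S_def by blast
  have "(\<Sum>k\<in>{1..N}. Wmat \<omega> Bs X r i k) = (\<Sum>k\<in>S. \<omega> S k (X r))"
    unfolding Wmat_def S_def[symmetric] by (rule sum.mono_neutral_right) (use S w in auto)
  then show "(\<Sum>k\<in>{1..N}. Wmat \<omega> Bs X r i k) = 1"
    using w(2) by simp
qed

lemma row_norm_Bmat_le:
  assumes "stochastic N W" "i \<in> {1..N}"
  shows "row_norm N (Bmat N H W) i \<le> row_norm N H i * 2"
proof -
  have "row_norm N (\<lambda>a b. idm a b - W a b) k \<le> 2" if k: "k \<in> {1..N}" for k
  proof -
    have "row_norm N (\<lambda>a b. idm a b - W a b) k \<le> (\<Sum>j\<in>{1..N}. idm k j + W k j)"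
      unfolding row_norm_def using stochasticD(1)[OF assms(1) k]
      by (intro sum_mono) (auto simp: idm_def abs_le_iff)
    also have "\<dots> = 2"
      using stochasticD(2)[OF stochastic_idm k] stochasticD(2)[OF assms(1) k]
      by (simp add: sum.distrib)
    finally show ?thesis .
  qed
  then have "row_norm N (matmul N H (\<lambda>a b. idm a b - W a b)) i \<le> row_norm N H i * 2"
    by (rule row_norm_matmul_le)
  then show ?thesis
    unfolding Bmat_def row_norm_def by simp
qed

lemma row_norm_le_norm1inf: "i \<in> {1..N} \<Longrightarrow> row_norm N M i \<le> norm1inf N M"
  unfolding norm1inf_def row_norm_def by (rule Max_ge) auto

lemma Gcal_le_card_Wmat_rows_eq:
  assumes "i \<in> {1..N}" "j \<in> {1..N}"
  shows "Gcal N Bs n m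
         \<le> card {r. n \<le> r \<and> r < n + m \<and> (\<forall>k\<in>{1..N}. Wmat \<omega> Bs X r i k = Wmat \<omega> Bs X r j k)}"
proof -
  have "Gcal N Bs n m \<le> card {r. n \<le> r \<and> r < n + m \<and> batch_of (Bs r) i = batch_of (Bs r) j}"
    unfolding Gcal_def using assms by (intro Min_le[OF finite_image_set2]) auto
  also have "\<dots> \<le> card {r. n \<le> r \<and> r < n + m \<and> (\<forall>k\<in>{1..N}. Wmat \<omega> Bs X r i k = Wmat \<omega> Bs X r j k)}"
    by (rule card_mono[OF finite_subset[of _ "{..<n + m}"]]) (auto simp: Wmat_def)
  finally show ?thesis .
qed

theorem lemma4p3:
  fixes N d P m n l :: nat
    and \<gamma> :: real
    and \<omega> :: "nat set \<Rightarrow> nat \<Rightarrow> state \<Rightarrow> real"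
    and Bs :: "nat \<Rightarrow> nat set set"
    and \<eta> :: "nat \<Rightarrow> nat \<Rightarrow> nat \<Rightarrow> real"
    and X0 :: state
  assumes "2 \<le> N" and "1 \<le> d" and "2 \<le> P"
    and "0 < \<gamma>" and "\<gamma> < 1"
    and "admissible_weights N \<omega>"
    and "\<forall>r. Bs r \<in> batch_partitions N P"
    and "1 \<le> m" and "l \<in> {1..d}"
  shows "let X = cbo N \<gamma> \<omega> Bs \<eta> X0;
             W = Wmat \<omega> Bs X
         in alpha N (matprod N (\<lambda>r. mat_add (Amat \<gamma> (W r)) (Bmat N (Hmat \<eta> r l) (W r))) n m)
            \<ge> \<gamma> * (1 - \<gamma>) ^ (m - 1) * real (Gcal N Bs n m) - Hcal N \<eta> l n m"
proof -
  define W where "W = Wmat \<omega> Bs (cbo N \<gamma> \<omega> Bs \<eta> X0)"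
  have "partition_on {1..N} (Bs r)" for r
    using assms(7) by (auto simp: batch_partitions_def)
  then have W_stochastic: "stochastic N (W r)" for r
    unfolding W_def by (rule stochastic_Wmat[OF assms(6)])
  have B: "row_norm N (Bmat N (Hmat \<eta> r l) (W r)) i \<le> 2 * norm1inf N (Hmat \<eta> r l)"
    if "i \<in> {1..N}" for r i
    using row_norm_Bmat_le[OF W_stochastic[of r] that, of "Hmat \<eta> r l"]
      row_norm_le_norm1inf[OF that, of "Hmat \<eta> r l"]
    by linarith
  have "\<gamma> * (1 - \<gamma>) ^ (m - 1) * real (Gcal N Bs n m)
          - 2 * ((\<Prod>r\<in>{n..<n+m}. 1 + 2 * norm1inf N (Hmat \<eta> r l)) - 1)
        \<le> alpha N (matprod N (\<lambda>r. mat_add (Amat \<gamma> (W r)) (Bmat N (Hmat \<eta> r l) (W r))) n m)"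
    by (rule alpha_matprod_perturbed_ge[where W = W and B = "\<lambda>r. Bmat N (Hmat \<eta> r l) (W r)"])
      (use W_stochastic B Gcal_le_card_Wmat_rows_eq assms in \<open>auto simp: W_def\<close>)
  then show ?thesis
    unfolding W_def Hcal_def Let_def by simp
qed

end
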